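(* Let $\alpha=(\alpha_n)_{n\ge1}$ be a non-negative non-increasing null sequence with $\alpha_1\le1$ and let $\omega\in(0,1)$. Suppose $C>0$ is a constant such that $$K^{(\omega)}_{n+j}(\alpha)\ge C\Big(\sum_{i=0}^nK^{(\omega)}_i(\alpha)\Big)^2$$ for all $j\in\mathbb N$ and $n\in\mathbb N\cup\{0\}$. Then $\langle\alpha\rangle$ is a stable Calkin space.
   Context: $K^{(\omega)}_n(\alpha)=|\{m:\omega^{n+1}<\alpha_m\le\omega^n\}|$ for $n\ge0$. $c_0$: complex null sequences; $\beta^\star$: non-increasing rearrangement of $(|\beta_n|)$. A Calkin space is a linear subspace $\mathfrak i\subseteq c_0$ such that $\gamma\in\mathfrak i,\beta\in c_0,\beta^\star\le\gamma^\star$ imply $\beta\in\mathfrak i$; $\langle\alpha\rangle$ is the smallest Calkin space containing $\alpha$. For $\beta,\gamma\in c_0$, $\beta\otimes\gamma$ is the non-increasing rearrangement with multiplicities of $(|\beta_i\gamma_j|)_{i,j}$; $\mathfrak i$ is stable if the smallest Calkin space containing all $\beta\otimes\gamma$, $\beta,\gamma\in\mathfrak i$, equals $\mathfrak i$. *)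

theory Defs
  imports "HOL-Analysis.Analysis"
begin

definition c0 :: "(nat \<Rightarrow> complex) set" where
  "c0 = {\<beta>. \<beta> \<longlonglongrightarrow> 0}"

text \<open>Non-increasing rearrangement (with multiplicities) of a non-negative null family
  f indexed by an infinite type: the n-th term (counting from 0) is
  inf over finite sets F of at most n indices of sup of f outside F.\<close>
definition rearr :: "('a \<Rightarrow> real) \<Rightarrow> nat \<Rightarrow> real" where
  "rearr f n = Inf {Sup (f ` (UNIV - F)) | F. finite F \<and> card F \<le> n}"

definition dstar :: "(nat \<Rightarrow> complex) \<Rightarrow> nat \<Rightarrow> real" where
  "dstar \<beta> = rearr (\<lambda>k. norm (\<beta> k))"

definition calkin :: "(nat \<Rightarrow> complex) set \<Rightarrow> bool" where
  "calkin I \<longleftrightarrow> I \<subseteq> c0 \<and> (\<lambda>_. 0) \<in> I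
     \<and> (\<forall>x\<in>I. \<forall>y\<in>I. (\<lambda>n. x n + y n) \<in> I)
     \<and> (\<forall>c. \<forall>x\<in>I. (\<lambda>n. c * x n) \<in> I)
     \<and> (\<forall>\<gamma>\<in>I. \<forall>\<beta>\<in>c0. (\<forall>n. dstar \<beta> n \<le> dstar \<gamma> n) \<longrightarrow> \<beta> \<in> I)"

definition calkin_hull :: "(nat \<Rightarrow> complex) set \<Rightarrow> (nat \<Rightarrow> complex) set" where
  "calkin_hull S = \<Inter> {I. calkin I \<and> S \<subseteq> I}"

definition tensor :: "(nat \<Rightarrow> complex) \<Rightarrow> (nat \<Rightarrow> complex) \<Rightarrow> nat \<Rightarrow> complex" where
  "tensor \<beta> \<gamma> = (\<lambda>n. complex_of_real (rearr (\<lambda>(i, j). norm (\<beta> i * \<gamma> j)) n))"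

definition stable :: "(nat \<Rightarrow> complex) set \<Rightarrow> bool" where
  "stable I \<longleftrightarrow> calkin I \<and> calkin_hull {tensor \<beta> \<gamma> | \<beta> \<gamma>. \<beta> \<in> I \<and> \<gamma> \<in> I} = I"

definition Kw :: "real \<Rightarrow> (nat \<Rightarrow> real) \<Rightarrow> nat \<Rightarrow> nat" where
  "Kw \<omega> \<alpha> n = card {m. \<omega> ^ (n + 1) < \<alpha> m \<and> \<alpha> m \<le> \<omega> ^ n}"

end

theory Submission
  imports Defs
begin

text \<open>
  The Calkin space generated by a non-increasing null sequence \<open>\<alpha>\<close> consists of the null
  sequences \<open>\<beta>\<close> with \<open>\<beta>\<^sup>\<star>\<^sub>n \<le> c \<alpha>\<^bsub>\<lfloor>n/k\<rfloor>\<^esub>\<close> for some \<open>c > 0\<close> and \<open>k \<ge> 1\<close>. Such bounds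
  come from dominations \<open>|\<beta>\<^sub>m| \<le> c \<alpha>\<^bsub>\<phi>(m)\<^esub>\<close> by maps \<open>\<phi>\<close> that are at most \<open>k\<close>-to-one on the
  support of \<open>\<beta>\<close>. Since \<open>(\<alpha> \<otimes> \<alpha>)\<^sub>n \<ge> \<alpha>\<^sub>0 \<alpha>\<^sub>n\<close>, the space is stable as soon as the
  family \<open>(\<alpha>\<^sub>i \<alpha>\<^sub>j)\<^sub>i\<^sub>,\<^sub>j\<close> is dominated by \<open>\<alpha>\<close> itself.

  Such a domination is built level by level. Write \<open>K\<^sub>i = K\<^sup>(\<^sup>\<omega>\<^sup>)\<^sub>i(\<alpha>)\<close>, choose \<open>e(u)\<close> with
  \<open>\<omega>\<^bsup>e(u)+1\<^esup> < \<alpha>\<^sub>u \<le> \<omega>\<^bsup>e(u)\<^esup>\<close>, and let \<open>N\<^sub>s = K\<^sub>0 + \<dots> + K\<^sub>s\<close> be the number of \<open>m\<close> with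
  \<open>\<alpha>\<^sub>m > \<omega>\<^bsup>s+1\<^esup>\<close>. The pairs \<open>(i, j)\<close> with \<open>e(i) + e(j) = s\<close> have \<open>\<alpha>\<^sub>i \<alpha>\<^sub>j \<le> \<omega>\<^sup>s\<close> and lie in
  the square of the first \<open>N\<^sub>s\<close> indices. The hypothesis gives \<open>C N\<^sub>s\<^sup>2 \<le> K\<^bsub>s+1\<^esub>\<close>, so these
  pairs can be distributed, \<open>\<lceil>1/C\<rceil>\<close> at a time, over the \<open>K\<^bsub>s+1\<^esub>\<close> indices \<open>m\<close> with
  \<open>\<omega>\<^bsup>s+2\<^esup> < \<alpha>\<^sub>m \<le> \<omega>\<^bsup>s+1\<^esup>\<close>, for which \<open>\<alpha>\<^sub>i \<alpha>\<^sub>j \<le> \<omega>\<^sup>s < \<omega>\<^sup>-\<^sup>2 \<alpha>\<^sub>m\<close>.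
\<close>

section \<open>Non-increasing rearrangements\<close>

lemma bdd_above_image_subset:
  "bdd_above (range f) \<Longrightarrow> bdd_above (f ` A)"
  by (rule bdd_above_mono) auto

lemma SUP_complement_nonneg:
  fixes f :: "'a \<Rightarrow> real"
  assumes "infinite (UNIV :: 'a set)" "\<And>x. f x \<ge> 0" "bdd_above (range f)" "finite F"
  shows "0 \<le> Sup (f ` (UNIV - F))"
proof -
  obtain y where "y \<notin> F" using ex_new_if_finite[OF assms(1,4)] by blast
  then have "f y \<le> Sup (f ` (UNIV - F))"
    using bdd_above_image_subset[OF assms(3)] by (intro cSUP_upper) auto
  then show ?thesis using assms(2)[of y] by linarith
qed

lemma rearr_nonneg:
  fixes f :: "'a \<Rightarrow> real"
  assumes "infinite (UNIV :: 'a set)" "\<And>x. f x \<ge> 0" "bdd_above (range f)"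
  shows "rearr f n \<ge> 0"
  unfolding rearr_def
  by (rule cInf_greatest) (auto intro: exI[of _ "{}"] SUP_complement_nonneg[OF assms])

lemma rearr_le_SUP:
  fixes f :: "'a \<Rightarrow> real"
  assumes "infinite (UNIV :: 'a set)" "\<And>x. f x \<ge> 0" "bdd_above (range f)"
    and "finite F" "card F \<le> n"
  shows "rearr f n \<le> Sup (f ` (UNIV - F))"
  unfolding rearr_def
proof (rule cInf_lower)
  show "Sup (f ` (UNIV - F)) \<in> {Sup (f ` (UNIV - F)) |F. finite F \<and> card F \<le> n}"
    using assms(4,5) by auto
  show "bdd_below {Sup (f ` (UNIV - F)) |F. finite F \<and> card F \<le> n}"
    by (rule bdd_belowI[of _ 0]) (auto intro: SUP_complement_nonneg[OF assms(1-3)])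
qed

lemma le_rearr:
  fixes f :: "'a \<Rightarrow> real"
  assumes "finite S" "card S > n" "\<And>x. x \<in> S \<Longrightarrow> v \<le> f x" "bdd_above (range f)"
  shows "v \<le> rearr f n"
  unfolding rearr_def
proof (rule cInf_greatest)
  show "{Sup (f ` (UNIV - F)) |F. finite F \<and> card F \<le> n} \<noteq> {}"
    by (auto intro: exI[of _ "{}"])
next
  fix x assume "x \<in> {Sup (f ` (UNIV - F)) |F. finite F \<and> card F \<le> n}"
  then obtain F where F: "finite F" "card F \<le> n" "x = Sup (f ` (UNIV - F))" by auto
  have "\<not> S \<subseteq> F"
  proof
    assume "S \<subseteq> F"
    then show False using card_mono[OF F(1), of S] F(2) assms(2) by linarith
  qed
  then obtain y where "y \<in> S" "y \<notin> F" by auto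
  then have "f y \<le> x"
    unfolding F(3) using bdd_above_image_subset[OF assms(4)] by (intro cSUP_upper) auto
  then show "v \<le> x" using assms(3)[OF \<open>y \<in> S\<close>] by linarith
qed

lemma decseq_bdd_above: "decseq (a :: nat \<Rightarrow> real) \<Longrightarrow> bdd_above (range a)"
  by (intro bdd_aboveI[of _ "a 0"]) (auto simp: decseq_def)

lemma rearr_decseq:
  fixes a :: "nat \<Rightarrow> real"
  assumes "\<And>m. a m \<ge> 0" "decseq a"
  shows "rearr a = a"
proof
  fix n
  have "rearr a n \<le> Sup (a ` (UNIV - {..<n}))"
    using assms decseq_bdd_above by (intro rearr_le_SUP) auto
  also have "\<dots> \<le> a n"
  proof (rule cSup_least)
    fix y assume "y \<in> a ` (UNIV - {..<n})"
    then obtain m where "m \<notin> {..<n}" "y = a m" by blast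
    then show "y \<le> a n" using decseqD[OF assms(2)] by (simp add: not_less)
  qed (use lessThan_iff in blast)
  finally have "rearr a n \<le> a n" .
  moreover have "a n \<le> rearr a n"
    using decseqD[OF assms(2)] decseq_bdd_above[OF assms(2)] by (intro le_rearr[of "{..n}"]) auto
  ultimately show "rearr a n = a n" by (rule antisym)
qed

lemma le_rearr_product:
  fixes a :: "nat \<Rightarrow> real"
  assumes "\<And>m. a m \<ge> 0" "decseq a"
  shows "a 0 * a n \<le> rearr (\<lambda>p. a (fst p) * a (snd p)) n"
proof (rule le_rearr[of "Pair 0 ` {..n}"])
  show "finite (Pair 0 ` {..n})" by simp
  show "n < card (Pair 0 ` {..n})" by (simp add: card_image inj_on_def)
  show "a 0 * a n \<le> a (fst p) * a (snd p)" if p: "p \<in> Pair 0 ` {..n}" for p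
  proof -
    obtain i where "p = Pair 0 i" "i \<in> {..n}" using p by blast
    then show ?thesis using decseqD[OF assms(2)] assms(1)[of 0] by (simp add: mult_left_mono)
  qed
  have "a m \<le> a 0" for m using decseqD[OF assms(2)] by simp
  then show "bdd_above (range (\<lambda>p. a (fst p) * a (snd p)))"
    using assms(1) by (intro bdd_aboveI[of _ "a 0 * a 0"]) (auto intro: mult_mono)
qed

lemma decseq_rearr:
  fixes f :: "'a \<Rightarrow> real"
  assumes "infinite (UNIV :: 'a set)" "\<And>x. f x \<ge> 0" "bdd_above (range f)"
  shows "decseq (rearr f)"
proof (rule decseq_SucI)
  fix n
  show "rearr f (Suc n) \<le> rearr f n"
    unfolding rearr_def
  proof (rule cInf_superset_mono)
    show "{Sup (f ` (UNIV - F)) |F. finite F \<and> card F \<le> n} \<noteq> {}"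
      by (auto intro: exI[of _ "{}"])
    show "bdd_below {Sup (f ` (UNIV - F)) |F. finite F \<and> card F \<le> Suc n}"
      by (rule bdd_belowI[of _ 0]) (auto intro: SUP_complement_nonneg[OF assms])
    show "{Sup (f ` (UNIV - F)) |F. finite F \<and> card F \<le> n}
        \<subseteq> {Sup (f ` (UNIV - F)) |F. finite F \<and> card F \<le> Suc n}"
      using le_SucI by blast
  qed
qed

lemma infinite_prod_nat: "infinite (UNIV :: (nat \<times> nat) set)"
  by (simp add: finite_prod)

lemma finite_superlevel_null:
  fixes f :: "nat \<Rightarrow> real"
  assumes "f \<longlonglongrightarrow> 0" "v > 0"
  shows "finite {m. v \<le> f m}"
proof -
  obtain N where "\<And>m. m \<ge> N \<Longrightarrow> f m < v"
    using order_tendstoD(2)[OF assms] by (auto simp: eventually_sequentially)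
  then have "{m. v \<le> f m} \<subseteq> {..<N}" by (force simp: not_le[symmetric])
  then show ?thesis by (rule finite_subset) simp
qed

lemma LIMSEQ_bdd_above: "(X :: nat \<Rightarrow> real) \<longlonglongrightarrow> L \<Longrightarrow> bdd_above (range X)"
  by (rule Bseq_bdd_above[OF convergent_imp_Bseq[OF convergentI]])

section \<open>Domination with bounded multiplicity\<close>

definition dominated :: "('a \<Rightarrow> real) \<Rightarrow> ('b \<Rightarrow> real) \<Rightarrow> real \<Rightarrow> nat \<Rightarrow> ('a \<Rightarrow> 'b) \<Rightarrow> bool" where
  "dominated f g c k \<phi> \<longleftrightarrow> c > 0 \<and> k > 0 \<and> (\<forall>x. f x \<le> c * g (\<phi> x))
     \<and> (\<forall>y. finite {x. \<phi> x = y \<and> f x \<noteq> 0} \<and> card {x. \<phi> x = y \<and> f x \<noteq> 0} \<le> k)"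

lemma dominatedD:
  assumes "dominated f g c k \<phi>"
  shows "c > 0" "k > 0" "f x \<le> c * g (\<phi> x)"
    "finite {x. \<phi> x = y \<and> f x \<noteq> 0}" "card {x. \<phi> x = y \<and> f x \<noteq> 0} \<le> k"
  using assms unfolding dominated_def by auto

lemma dominated_inj:
  assumes "c > 0" "\<And>x. f x \<le> c * g (\<phi> x)" "inj_on \<phi> {x. f x \<noteq> 0}"
  shows "dominated f g c 1 \<phi>"
proof -
  have fibre: "{x. \<phi> x = y \<and> f x \<noteq> 0} = \<phi> -` {y} \<inter> {x. f x \<noteq> 0}" for y by auto
  show ?thesis
    unfolding dominated_def fibre
    using assms card_vimage_inj_on_le[OF assms(3), of "{_}"] finite_vimage_IntI[OF _ assms(3)]
    by simp
qed

lemma dominated_le: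
  assumes "c > 0" "\<And>x. f x \<le> c * g x"
  shows "dominated f g c 1 (\<lambda>x. x)"
  using assms by (intro dominated_inj) auto

lemma div_fibre_subset: "0 < (k::nat) \<Longrightarrow> {n. n div k = d} \<subseteq> {d * k..<d * k + k}"
  using dividend_less_div_times[of k] by (auto simp: add.commute)

lemma dominated_div:
  assumes "c > 0" "k > 0" "\<And>n. f n \<le> c * g (n div k)"
  shows "dominated f g c k (\<lambda>n. n div k)"
proof -
  have "{n. n div k = d \<and> f n \<noteq> 0} \<subseteq> {d * k..<d * k + k}" for d
    using div_fibre_subset[OF assms(2)] by blast
  then show ?thesis
    unfolding dominated_def using assms card_mono[OF finite_atLeastLessThan]
    by (auto intro: finite_subset) (metis card_atLeastLessThan diff_add_inverse)
qed

lemma dominated_trans: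
  assumes fg: "dominated f g c1 k1 \<phi>1" and gh: "dominated g h c2 k2 \<phi>2"
    and "\<And>x. f x \<ge> 0"
  shows "dominated f h (c1 * c2) (k1 * k2) (\<lambda>x. \<phi>2 (\<phi>1 x))"
proof -
  note c1 = dominatedD(1,2)[OF fg] and le1 = dominatedD(3)[OF fg]
    and fin1 = dominatedD(4)[OF fg] and card1 = dominatedD(5)[OF fg]
  note c2 = dominatedD(1,2)[OF gh] and le2 = dominatedD(3)[OF gh]
    and fin2 = dominatedD(4)[OF gh] and card2 = dominatedD(5)[OF gh]
  have le: "f x \<le> c1 * c2 * h (\<phi>2 (\<phi>1 x))" for x
  proof -
    have "c1 * g (\<phi>1 x) \<le> c1 * (c2 * h (\<phi>2 (\<phi>1 x)))"
      using le2 c1 by (simp add: mult_left_mono)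
    then show ?thesis using le1[of x] by (simp add: mult.assoc)
  qed
  have support: "f x \<noteq> 0 \<Longrightarrow> g (\<phi>1 x) \<noteq> 0" for x
    using le1[of x] assms(3)[of x] by auto
  have fibre: "finite {x. \<phi>2 (\<phi>1 x) = z \<and> f x \<noteq> 0}
      \<and> card {x. \<phi>2 (\<phi>1 x) = z \<and> f x \<noteq> 0} \<le> k1 * k2" for z
  proof -
    let ?U = "\<Union>y\<in>{y. \<phi>2 y = z \<and> g y \<noteq> 0}. {x. \<phi>1 x = y \<and> f x \<noteq> 0}"
    have sub: "{x. \<phi>2 (\<phi>1 x) = z \<and> f x \<noteq> 0} \<subseteq> ?U" using support by blast
    have finU: "finite ?U" using fin1 fin2 by blast
    have "card {x. \<phi>2 (\<phi>1 x) = z \<and> f x \<noteq> 0} \<le> card ?U"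
      by (rule card_mono[OF finU sub])
    also have "\<dots> \<le> (\<Sum>y\<in>{y. \<phi>2 y = z \<and> g y \<noteq> 0}. card {x. \<phi>1 x = y \<and> f x \<noteq> 0})"
      by (rule card_UN_le[OF fin2])
    also have "\<dots> \<le> k1 * card {y. \<phi>2 y = z \<and> g y \<noteq> 0}"
      using sum_mono[of _ "\<lambda>y. card {x. \<phi>1 x = y \<and> f x \<noteq> 0}" "\<lambda>_. k1", OF card1]
      by (simp add: mult.commute)
    also have "\<dots> \<le> k1 * k2" using card2 by simp
    finally show ?thesis using finite_subset[OF sub finU] by blast
  qed
  show ?thesis unfolding dominated_def using c1 c2 le fibre by auto
qed

lemma dominated_product:
  assumes d1: "dominated f1 g1 c1 k1 \<phi>1" and d2: "dominated f2 g2 c2 k2 \<phi>2"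
    and "\<And>x. f1 x \<ge> 0" "\<And>y. f2 y \<ge> 0"
  shows "dominated (\<lambda>p. f1 (fst p) * f2 (snd p)) (\<lambda>q. g1 (fst q) * g2 (snd q))
    (c1 * c2) (k1 * k2) (\<lambda>p. (\<phi>1 (fst p), \<phi>2 (snd p)))"
proof -
  note c1 = dominatedD(1,2)[OF d1] and le1 = dominatedD(3)[OF d1]
    and fin1 = dominatedD(4)[OF d1] and card1 = dominatedD(5)[OF d1]
  note c2 = dominatedD(1,2)[OF d2] and le2 = dominatedD(3)[OF d2]
    and fin2 = dominatedD(4)[OF d2] and card2 = dominatedD(5)[OF d2]
  have le: "f1 x * f2 y \<le> c1 * c2 * (g1 (\<phi>1 x) * g2 (\<phi>2 y))" for x y
  proof -
    have "f1 x * f2 y \<le> (c1 * g1 (\<phi>1 x)) * (c2 * g2 (\<phi>2 y))"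
      using le1 le2 assms(3,4) c2 by (intro mult_mono) (auto intro: order_trans)
    then show ?thesis by (simp add: algebra_simps)
  qed
  have sub: "{p. (\<phi>1 (fst p), \<phi>2 (snd p)) = q \<and> f1 (fst p) * f2 (snd p) \<noteq> 0}
      \<subseteq> {x. \<phi>1 x = fst q \<and> f1 x \<noteq> 0} \<times> {y. \<phi>2 y = snd q \<and> f2 y \<noteq> 0}" for q
    by auto
  have card: "card {p. (\<phi>1 (fst p), \<phi>2 (snd p)) = q \<and> f1 (fst p) * f2 (snd p) \<noteq> 0} \<le> k1 * k2"
    for q
  proof -
    have "card {p. (\<phi>1 (fst p), \<phi>2 (snd p)) = q \<and> f1 (fst p) * f2 (snd p) \<noteq> 0}
        \<le> card {x. \<phi>1 x = fst q \<and> f1 x \<noteq> 0} * card {y. \<phi>2 y = snd q \<and> f2 y \<noteq> 0}"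
      using card_mono[OF _ sub[of q]] fin1 fin2 by (simp add: card_cartesian_product)
    also have "\<dots> \<le> k1 * k2" using card1 card2 by (rule mult_le_mono)
    finally show ?thesis .
  qed
  show ?thesis
    unfolding dominated_def using c1 c2 le card finite_subset[OF sub] fin1 fin2 by auto
qed

lemma dominated_add:
  fixes g :: "nat \<Rightarrow> real"
  assumes g: "decseq g" "\<And>m. g m \<ge> 0"
    and d1: "dominated f1 g c1 k1 \<phi>1" and d2: "dominated f2 g c2 k2 \<phi>2"
    and "\<And>x. f1 x \<ge> 0" "\<And>x. f2 x \<ge> 0" "\<And>x. h x \<ge> 0" "\<And>x. h x \<le> f1 x + f2 x"
  defines "\<psi> \<equiv> \<lambda>x. if f1 x = 0 then \<phi>2 x else if f2 x = 0 then \<phi>1 x else min (\<phi>1 x) (\<phi>2 x)"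
  shows "dominated h g (c1 + c2) (k1 + k2) \<psi>"
proof -
  note c1 = dominatedD(1,2)[OF d1] and le1 = dominatedD(3)[OF d1]
    and fin1 = dominatedD(4)[OF d1] and card1 = dominatedD(5)[OF d1]
  note c2 = dominatedD(1,2)[OF d2] and le2 = dominatedD(3)[OF d2]
    and fin2 = dominatedD(4)[OF d2] and card2 = dominatedD(5)[OF d2]
  have le: "h x \<le> (c1 + c2) * g (\<psi> x)" for x
  proof -
    have "g (\<phi>1 x) \<le> g (min (\<phi>1 x) (\<phi>2 x))" "g (\<phi>2 x) \<le> g (min (\<phi>1 x) (\<phi>2 x))"
      using decseqD[OF g(1)] by simp_all
    then have "c1 * g (\<phi>1 x) \<le> c1 * g (min (\<phi>1 x) (\<phi>2 x))"
      "c2 * g (\<phi>2 x) \<le> c2 * g (min (\<phi>1 x) (\<phi>2 x))"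
      using c1 c2 by simp_all
    moreover have "0 \<le> c1 * g (\<phi>2 x)" "0 \<le> c2 * g (\<phi>1 x)" using c1 c2 g(2) by simp_all
    ultimately show ?thesis
      using assms(5-8)[of x] le1[of x] le2[of x]
      unfolding \<psi>_def by (simp add: distrib_right split: if_splits; linarith)
  qed
  have sub: "{x. \<psi> x = z \<and> h x \<noteq> 0}
      \<subseteq> {x. \<phi>1 x = z \<and> f1 x \<noteq> 0} \<union> {x. \<phi>2 x = z \<and> f2 x \<noteq> 0}" for z
  proof
    fix x assume x: "x \<in> {x. \<psi> x = z \<and> h x \<noteq> 0}"
    then have "f1 x \<noteq> 0 \<or> f2 x \<noteq> 0" using assms(7,8)[of x] by auto
    with x show "x \<in> {x. \<phi>1 x = z \<and> f1 x \<noteq> 0} \<union> {x. \<phi>2 x = z \<and> f2 x \<noteq> 0}"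
      unfolding \<psi>_def by (auto simp: min_def split: if_splits)
  qed
  have "card {x. \<psi> x = z \<and> h x \<noteq> 0} \<le> k1 + k2" for z
  proof -
    have "card {x. \<psi> x = z \<and> h x \<noteq> 0}
        \<le> card ({x. \<phi>1 x = z \<and> f1 x \<noteq> 0} \<union> {x. \<phi>2 x = z \<and> f2 x \<noteq> 0})"
      using fin1 fin2 by (intro card_mono[OF _ sub]) auto
    also have "\<dots> \<le> k1 + k2" using card_Un_le card1[of z] card2[of z] by (meson add_mono order_trans)
    finally show ?thesis .
  qed
  then show ?thesis
    unfolding dominated_def using c1 c2 le finite_subset[OF sub] fin1 fin2 by auto
qed

lemma dominated_bdd_above:
  assumes "dominated f g c k \<phi>" "bdd_above (range g)"
  shows "bdd_above (range f)"
proof -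
  obtain B where "\<And>y. g y \<le> B" using assms(2) by (auto simp: bdd_above_def)
  then have "f x \<le> c * B" for x
    using assms(1) unfolding dominated_def by (meson mult_left_mono order_trans less_imp_le)
  then show ?thesis by (intro bdd_aboveI[of _ "c * B"]) auto
qed

lemma rearr_dominated_SUP:
  fixes f :: "'a \<Rightarrow> real" and g :: "'b \<Rightarrow> real"
  assumes "infinite (UNIV :: 'a set)" "infinite (UNIV :: 'b set)"
    and "\<And>x. f x \<ge> 0" "\<And>y. g y \<ge> 0" "bdd_above (range g)"
    and fg: "dominated f g c k \<phi>" and F: "finite F" "card F \<le> n div k"
  shows "rearr f n \<le> c * Sup (g ` (UNIV - F))"
proof -
  note c = dominatedD(1)[OF fg] and le = dominatedD(3)[OF fg]
    and fin = dominatedD(4)[OF fg] and card = dominatedD(5)[OF fg]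
  define E where "E = (\<Union>y\<in>F. {x. \<phi> x = y \<and> f x \<noteq> 0})"
  have "finite E" unfolding E_def using F(1) fin by blast
  have "card E \<le> (\<Sum>y\<in>F. card {x. \<phi> x = y \<and> f x \<noteq> 0})"
    unfolding E_def by (rule card_UN_le[OF F(1)])
  also have "\<dots> \<le> k * card F"
    using sum_bounded_above[of F "\<lambda>y. card {x. \<phi> x = y \<and> f x \<noteq> 0}" k] card
    by (simp add: mult.commute)
  also have "\<dots> \<le> n" using F(2) by (metis div_times_less_eq_dividend le_trans mult.commute mult_le_mono2)
  finally have "card E \<le> n" .
  have g_bdd: "bdd_above (g ` (UNIV - F))" by (rule bdd_above_image_subset[OF assms(5)])
  have "rearr f n \<le> Sup (f ` (UNIV - E))"
    using assms(1,3) dominated_bdd_above[OF fg assms(5)] \<open>finite E\<close> \<open>card E \<le> n\<close>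
    by (rule rearr_le_SUP)
  also have "\<dots> \<le> c * Sup (g ` (UNIV - F))"
  proof (rule cSup_least)
    show "f ` (UNIV - E) \<noteq> {}" using ex_new_if_finite[OF assms(1) \<open>finite E\<close>] by blast
    fix w assume "w \<in> f ` (UNIV - E)"
    then obtain x where "x \<notin> E" "w = f x" by blast
    show "w \<le> c * Sup (g ` (UNIV - F))"
    proof (cases "\<phi> x \<in> F")
      case True
      then have "w = 0" using \<open>x \<notin> E\<close> \<open>w = f x\<close> unfolding E_def by blast
      then show ?thesis
        using c SUP_complement_nonneg[OF assms(2,4,5) F(1)] by simp
    next
      case False
      then have "g (\<phi> x) \<le> Sup (g ` (UNIV - F))" using g_bdd by (intro cSUP_upper) auto
      then show ?thesis using le[of x] c \<open>w = f x\<close> by (meson mult_left_mono order_trans less_imp_le)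
    qed
  qed
  finally show ?thesis .
qed

lemma rearr_dominated:
  fixes f :: "'a \<Rightarrow> real" and g :: "'b \<Rightarrow> real"
  assumes "infinite (UNIV :: 'a set)" "infinite (UNIV :: 'b set)"
    and "\<And>x. f x \<ge> 0" "\<And>y. g y \<ge> 0" "bdd_above (range g)"
    and fg: "dominated f g c k \<phi>"
  shows "rearr f n \<le> c * rearr g (n div k)"
proof -
  have c: "c > 0" using fg unfolding dominated_def by simp
  have "rearr f n / c \<le> rearr g (n div k)"
    unfolding rearr_def[of g]
  proof (rule cInf_greatest)
    fix z assume "z \<in> {Sup (g ` (UNIV - F)) |F. finite F \<and> card F \<le> n div k}"
    then obtain F where "finite F" "card F \<le> n div k" "z = Sup (g ` (UNIV - F))" by blast
    then show "rearr f n / c \<le> z"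
      using rearr_dominated_SUP[OF assms] c by (simp add: divide_le_eq mult.commute)
  qed (auto intro: exI[of _ "{}"])
  then show ?thesis using c by (simp add: divide_le_eq mult.commute)
qed

lemma dominated_by_rearr:
  fixes f :: "nat \<Rightarrow> real"
  assumes f0: "\<And>m. f m \<ge> 0" and f_null: "f \<longlonglongrightarrow> 0"
  shows "\<exists>\<sigma>. dominated f (rearr f) 1 1 \<sigma>"
proof -
  \<comment> \<open>\<open>\<sigma> m\<close> is the position of \<open>m\<close> when the terms are listed in non-increasing order,
    ties broken by index.\<close>
  define before where "before m' m \<longleftrightarrow> f m < f m' \<or> (f m' = f m \<and> m' < m)" for m' m
  define \<sigma> where "\<sigma> m = card {m'. before m' m}" for m
  have before_ge: "{m'. before m' m} \<subseteq> {m'. f m \<le> f m'}" for m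
    unfolding before_def by auto
  have fin: "finite {m'. before m' m}" if "f m > 0" for m
    using finite_subset[OF before_ge finite_superlevel_null[OF f_null that]] .
  have card_insert: "card (insert m {m'. before m' m}) = Suc (\<sigma> m)" if "f m > 0" for m
    unfolding \<sigma>_def using fin[OF that] by (simp add: before_def)
  have less: "\<sigma> m1 < \<sigma> m2" if "before m1 m2" "f m2 > 0" for m1 m2
  proof -
    have "f m1 > 0" using that unfolding before_def by auto
    have "insert m1 {m'. before m' m1} \<subseteq> {m'. before m' m2}"
      using that(1) unfolding before_def by auto
    then have "Suc (\<sigma> m1) \<le> \<sigma> m2"
      unfolding \<sigma>_def[of m2] using card_insert[OF \<open>f m1 > 0\<close>] card_mono[OF fin[OF that(2)]]
      by metis
    then show ?thesis by simp
  qed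
  have total: "before m1 m2 \<or> before m2 m1" if "m1 \<noteq> m2" for m1 m2
    using that unfolding before_def by (cases "f m1 = f m2") auto
  have "inj_on \<sigma> {m. f m \<noteq> 0}"
  proof (rule inj_onI, rule ccontr)
    fix m1 m2 assume "m1 \<in> {m. f m \<noteq> 0}" "m2 \<in> {m. f m \<noteq> 0}" "\<sigma> m1 = \<sigma> m2" "m1 \<noteq> m2"
    then show False
      using f0[of m1] f0[of m2] less[of m1 m2] less[of m2 m1] total[of m1 m2] by auto
  qed
  moreover have "f m \<le> 1 * rearr f (\<sigma> m)" for m
  proof (cases "f m > 0")
    case True
    show ?thesis
      using True card_insert[OF True] fin[OF True] before_ge LIMSEQ_bdd_above[OF f_null]
      by (auto intro!: le_rearr[of "insert m {m'. before m' m}"])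
  next
    case False
    then show ?thesis using f0[of m] rearr_nonneg[OF infinite_UNIV_nat f0 LIMSEQ_bdd_above[OF f_null]] by simp
  qed
  ultimately have "dominated f (rearr f) 1 1 \<sigma>" by (intro dominated_inj) auto
  then show ?thesis by blast
qed

section \<open>The Calkin space generated by a non-increasing sequence\<close>

lemma calkin_add: "calkin I \<Longrightarrow> x \<in> I \<Longrightarrow> y \<in> I \<Longrightarrow> (\<lambda>n. x n + y n) \<in> I"
  unfolding calkin_def by blast

lemma calkin_scale: "calkin I \<Longrightarrow> x \<in> I \<Longrightarrow> (\<lambda>n. c * x n) \<in> I"
  unfolding calkin_def by blast

lemma calkin_dstar_le:
  "calkin I \<Longrightarrow> \<gamma> \<in> I \<Longrightarrow> \<beta> \<in> c0 \<Longrightarrow> (\<And>n. dstar \<beta> n \<le> dstar \<gamma> n) \<Longrightarrow> \<beta> \<in> I"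
  unfolding calkin_def by blast

lemma calkin_sum:
  fixes k :: nat
  assumes "calkin I" "\<And>\<rho>. \<rho> < k \<Longrightarrow> x \<rho> \<in> I"
  shows "(\<lambda>n. \<Sum>\<rho><k. x \<rho> n) \<in> I"
  using assms(2)
proof (induction k)
  case 0
  then show ?case using assms(1) unfolding calkin_def by simp
next
  case (Suc k)
  then show ?case using calkin_add[OF assms(1), of "\<lambda>n. \<Sum>\<rho><k. x \<rho> n" "x k"] by simp
qed

lemma c0_iff_norm: "\<beta> \<in> c0 \<longleftrightarrow> (\<lambda>n. norm (\<beta> n)) \<longlonglongrightarrow> 0"
  unfolding c0_def by (simp add: tendsto_norm_zero_iff)

lemma dilation_null: "a \<longlonglongrightarrow> 0 \<Longrightarrow> 0 < k \<Longrightarrow> (\<lambda>n. a (n div k)) \<longlonglongrightarrow> 0"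
  by (rule filterlim_compose[OF _ filterlim_at_top_div_const_nat])

definition principal :: "(nat \<Rightarrow> real) \<Rightarrow> (nat \<Rightarrow> complex) set" where
  "principal a = {\<beta> \<in> c0. \<exists>c k. c > 0 \<and> k > 0 \<and> (\<forall>n. dstar \<beta> n \<le> c * a (n div k))}"

lemma principal_c0: "\<beta> \<in> principal a \<Longrightarrow> \<beta> \<in> c0"
  unfolding principal_def by blast

context
  fixes a :: "nat \<Rightarrow> real"
  assumes a_nonneg: "\<And>m. a m \<ge> 0" and a_dec: "decseq a" and a_null: "a \<longlonglongrightarrow> 0"
begin

lemma dstar_of_real: "dstar (\<lambda>n. complex_of_real (a n)) = a"
  unfolding dstar_def using rearr_decseq[OF a_nonneg a_dec] a_nonneg by simp

lemma principal_iff_dominated: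
  "\<beta> \<in> principal a \<longleftrightarrow> \<beta> \<in> c0 \<and> (\<exists>c k \<phi>. dominated (\<lambda>m. norm (\<beta> m)) a c k \<phi>)"
proof (intro iffI conjI)
  assume \<beta>: "\<beta> \<in> principal a"
  then show "\<beta> \<in> c0" unfolding principal_def by blast
  let ?f = "\<lambda>m. norm (\<beta> m)"
  obtain c k where "c > 0" "k > 0" "\<And>n. rearr ?f n \<le> c * a (n div k)"
    using \<beta> unfolding principal_def dstar_def by blast
  then have "dominated (rearr ?f) a c k (\<lambda>n. n div k)" by (rule dominated_div)
  moreover obtain \<sigma> where "dominated ?f (rearr ?f) 1 1 \<sigma>"
    using dominated_by_rearr[of ?f] \<open>\<beta> \<in> c0\<close> unfolding c0_iff_norm by auto
  ultimately show "\<exists>c k \<phi>. dominated ?f a c k \<phi>"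
    using dominated_trans[of ?f] by fastforce
next
  assume "\<beta> \<in> c0 \<and> (\<exists>c k \<phi>. dominated (\<lambda>m. norm (\<beta> m)) a c k \<phi>)"
  then obtain c k \<phi> where "\<beta> \<in> c0" and d: "dominated (\<lambda>m. norm (\<beta> m)) a c k \<phi>" by blast
  have "dstar \<beta> n \<le> c * a (n div k)" for n
    using rearr_dominated[OF infinite_UNIV_nat infinite_UNIV_nat norm_ge_zero a_nonneg
        decseq_bdd_above[OF a_dec] d] rearr_decseq[OF a_nonneg a_dec]
    unfolding dstar_def by simp
  then show "\<beta> \<in> principal a"
    using \<open>\<beta> \<in> c0\<close> d unfolding principal_def dominated_def by blast
qed

lemma principal_zero: "(\<lambda>_. 0) \<in> principal a"
proof -
  have "dominated (\<lambda>_. 0) a 1 1 (\<lambda>x. x)" by (rule dominated_le) (auto simp: a_nonneg)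
  then show ?thesis unfolding principal_iff_dominated c0_def by auto
qed

lemma principal_scale:
  assumes "x \<in> principal a"
  shows "(\<lambda>n. s * x n) \<in> principal a"
proof -
  obtain c k \<phi> where "x \<in> c0" and d: "dominated (\<lambda>m. norm (x m)) a c k \<phi>"
    using assms unfolding principal_iff_dominated by blast
  have "norm (s * x m) \<le> (norm s + 1) * norm (x m)" for m
    by (simp add: norm_mult mult_right_mono)
  then have "dominated (\<lambda>m. norm (s * x m)) (\<lambda>m. norm (x m)) (norm s + 1) 1 (\<lambda>m. m)"
    by (intro dominated_le) (auto intro: add_nonneg_pos)
  from dominated_trans[OF this d] have "dominated (\<lambda>m. norm (s * x m)) a ((norm s + 1) * c) k \<phi>"
    by simp
  moreover have "(\<lambda>n. s * x n) \<in> c0"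
    using \<open>x \<in> c0\<close> tendsto_mult_right_zero unfolding c0_def by blast
  ultimately show ?thesis unfolding principal_iff_dominated by blast
qed

lemma principal_add:
  assumes "x \<in> principal a" "y \<in> principal a"
  shows "(\<lambda>n. x n + y n) \<in> principal a"
proof -
  obtain c1 k1 \<phi>1 c2 k2 \<phi>2 where "x \<in> c0" "y \<in> c0"
    and "dominated (\<lambda>m. norm (x m)) a c1 k1 \<phi>1" "dominated (\<lambda>m. norm (y m)) a c2 k2 \<phi>2"
    using assms unfolding principal_iff_dominated by blast
  from dominated_add[OF a_dec a_nonneg this(3,4) norm_ge_zero norm_ge_zero norm_ge_zero
      norm_triangle_ineq]
  have "\<exists>c k \<phi>. dominated (\<lambda>m. norm (x m + y m)) a c k \<phi>" by blast
  moreover have "(\<lambda>n. x n + y n) \<in> c0"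
    using \<open>x \<in> c0\<close> \<open>y \<in> c0\<close> tendsto_add_zero unfolding c0_def by blast
  ultimately show ?thesis unfolding principal_iff_dominated by blast
qed

lemma calkin_principal: "calkin (principal a)"
proof -
  have "\<beta> \<in> principal a"
    if \<gamma>: "\<gamma> \<in> principal a" and \<beta>: "\<beta> \<in> c0" and le: "\<And>n. dstar \<beta> n \<le> dstar \<gamma> n"
    for \<beta> \<gamma>
  proof -
    obtain c k where "c > 0" "k > 0" "\<And>n. dstar \<gamma> n \<le> c * a (n div k)"
      using \<gamma> unfolding principal_def by blast
    then show ?thesis using \<beta> le unfolding principal_def by (blast intro: order_trans)
  qed
  then show ?thesis
    unfolding calkin_def using principal_zero principal_add principal_scale
    by (auto simp: principal_def)
qed

lemma of_real_in_principal: "(\<lambda>n. complex_of_real (a n)) \<in> principal a"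
proof -
  have "(\<lambda>n. complex_of_real (a n)) \<in> c0"
    unfolding c0_def using tendsto_of_real[OF a_null] by simp
  moreover have "\<exists>c k. (0::real) < c \<and> (0::nat) < k
      \<and> (\<forall>n. dstar (\<lambda>n. complex_of_real (a n)) n \<le> c * a (n div k))"
    by (intro exI[of _ 1]) (simp add: dstar_of_real)
  ultimately show ?thesis unfolding principal_def by blast
qed

lemma dilation_in_calkin:
  assumes I: "calkin I" "(\<lambda>n. complex_of_real (a n)) \<in> I" and "k > 0"
  shows "(\<lambda>n. complex_of_real (a (n div k))) \<in> I"
proof -
  \<comment> \<open>The dilation is the sum of its \<open>k\<close> residue-class parts, each of which is \<open>a\<close>
    spread out by zeros.\<close>
  define e where "e \<rho> n = (if n mod k = \<rho> then complex_of_real (a (n div k)) else 0)" for \<rho> n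
  have "e \<rho> \<in> I" for \<rho>
  proof (rule calkin_dstar_le[OF I])
    have norm_e: "norm (e \<rho> n) \<le> 1 * a (n div k)" for n
      unfolding e_def using a_nonneg by simp
    show "e \<rho> \<in> c0"
      unfolding c0_iff_norm using norm_e
      by (intro Lim_null_comparison[OF always_eventually dilation_null[OF a_null \<open>k > 0\<close>]])
        simp
    have mod_eq: "n mod k = \<rho>" if "norm (e \<rho> n) \<noteq> 0" for n
      using that unfolding e_def by (auto split: if_splits)
    have "inj_on (\<lambda>n. n div k) {n. norm (e \<rho> n) \<noteq> 0}"
    proof (intro inj_onI)
      fix m n assume "m \<in> {n. norm (e \<rho> n) \<noteq> 0}" "n \<in> {n. norm (e \<rho> n) \<noteq> 0}"
        and "m div k = n div k"
      then show "m = n"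
        using mod_eq[of m] mod_eq[of n] div_mult_mod_eq[of m k] div_mult_mod_eq[of n k] by simp
    qed
    then have "dominated (\<lambda>n. norm (e \<rho> n)) a 1 1 (\<lambda>n. n div k)"
      using norm_e by (intro dominated_inj) auto
    from rearr_dominated[OF infinite_UNIV_nat infinite_UNIV_nat norm_ge_zero a_nonneg
        decseq_bdd_above[OF a_dec] this]
    show "dstar (e \<rho>) n \<le> dstar (\<lambda>n. complex_of_real (a n)) n" for n
      unfolding dstar_of_real dstar_def rearr_decseq[OF a_nonneg a_dec] by simp
  qed
  then have "(\<lambda>n. \<Sum>\<rho><k. e \<rho> n) \<in> I" by (rule calkin_sum[OF I(1)])
  moreover have "(\<Sum>\<rho><k. e \<rho> n) = complex_of_real (a (n div k))" for n
    unfolding e_def using \<open>k > 0\<close> by (simp add: sum.delta')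
  ultimately show ?thesis by simp
qed

lemma principal_subset:
  assumes I: "calkin I" "(\<lambda>n. complex_of_real (a n)) \<in> I"
  shows "principal a \<subseteq> I"
proof
  fix \<beta> assume "\<beta> \<in> principal a"
  then obtain c k where "\<beta> \<in> c0" "c > 0" "k > 0" and le: "\<And>n. dstar \<beta> n \<le> c * a (n div k)"
    unfolding principal_def by blast
  let ?\<gamma> = "\<lambda>n. complex_of_real c * complex_of_real (a (n div k))"
  have "?\<gamma> \<in> I" using calkin_scale[OF I(1) dilation_in_calkin[OF I \<open>k > 0\<close>]] .
  moreover have "dstar ?\<gamma> = (\<lambda>n. c * a (n div k))"
  proof -
    have "decseq (\<lambda>n. c * a (n div k))"
      using \<open>c > 0\<close> decseqD[OF a_dec] by (intro decseq_SucI) (simp add: div_le_mono)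
    then show ?thesis
      unfolding dstar_def using rearr_decseq[of "\<lambda>n. c * a (n div k)"] \<open>c > 0\<close> a_nonneg
      by (simp add: norm_mult)
  qed
  ultimately show "\<beta> \<in> I" using calkin_dstar_le[OF I(1) _ \<open>\<beta> \<in> c0\<close>] le by simp
qed

lemma calkin_hull_principal: "calkin_hull {\<lambda>n. complex_of_real (a n)} = principal a"
  unfolding calkin_hull_def using calkin_principal of_real_in_principal principal_subset by blast

lemma norm_tensor:
  fixes \<beta> \<gamma> :: "nat \<Rightarrow> complex"
  assumes "bdd_above (range (\<lambda>p. norm (\<beta> (fst p)) * norm (\<gamma> (snd p))))"
  shows "norm (tensor \<beta> \<gamma> n) = rearr (\<lambda>p. norm (\<beta> (fst p)) * norm (\<gamma> (snd p))) n"
proof -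
  have "(\<lambda>(i, j). norm (\<beta> i * \<gamma> j)) = (\<lambda>p. norm (\<beta> (fst p)) * norm (\<gamma> (snd p)))"
    by (auto simp: norm_mult)
  then show ?thesis
    unfolding tensor_def using rearr_nonneg[OF infinite_prod_nat _ assms] by simp
qed

lemma dstar_tensor:
  fixes \<beta> \<gamma> :: "nat \<Rightarrow> complex"
  assumes "bdd_above (range (\<lambda>p. norm (\<beta> (fst p)) * norm (\<gamma> (snd p))))"
  shows "dstar (tensor \<beta> \<gamma>) = rearr (\<lambda>p. norm (\<beta> (fst p)) * norm (\<gamma> (snd p)))"
  unfolding dstar_def norm_tensor[OF assms]
  using rearr_decseq[OF _ decseq_rearr[OF infinite_prod_nat _ assms]]
    rearr_nonneg[OF infinite_prod_nat _ assms] by simp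

lemma tensor_in_principal:
  assumes aa: "dominated (\<lambda>p. a (fst p) * a (snd p)) a c k \<theta>"
    and "\<beta> \<in> principal a" "\<gamma> \<in> principal a"
  shows "tensor \<beta> \<gamma> \<in> principal a"
proof -
  let ?P = "\<lambda>p. norm (\<beta> (fst p)) * norm (\<gamma> (snd p))"
  obtain c1 k1 \<phi>1 c2 k2 \<phi>2 where "dominated (\<lambda>m. norm (\<beta> m)) a c1 k1 \<phi>1"
    "dominated (\<lambda>m. norm (\<gamma> m)) a c2 k2 \<phi>2"
    using assms(2,3) unfolding principal_iff_dominated by blast
  from dominated_trans[OF dominated_product[OF this norm_ge_zero norm_ge_zero] aa]
  have d: "dominated ?P a (c1 * c2 * c) (k1 * k2 * k) (\<lambda>p. \<theta> (\<phi>1 (fst p), \<phi>2 (snd p)))"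
    by simp
  then have c: "c1 * c2 * c > 0" and k: "k1 * k2 * k > 0" unfolding dominated_def by auto
  have P_bdd: "bdd_above (range ?P)"
    by (rule dominated_bdd_above[OF d decseq_bdd_above[OF a_dec]])
  have le: "rearr ?P n \<le> c1 * c2 * c * a (n div (k1 * k2 * k))" for n
    using rearr_dominated[OF infinite_prod_nat infinite_UNIV_nat _ a_nonneg
        decseq_bdd_above[OF a_dec] d]
    unfolding rearr_decseq[OF a_nonneg a_dec] by simp
  have P_nonneg: "0 \<le> rearr ?P n" for n
    by (rule rearr_nonneg[OF infinite_prod_nat _ P_bdd]) simp
  have "(\<lambda>n. norm (tensor \<beta> \<gamma> n)) \<longlonglongrightarrow> 0"
  proof (rule Lim_null_comparison[OF always_eventually])
    show "\<forall>n. norm (norm (tensor \<beta> \<gamma> n)) \<le> c1 * c2 * c * a (n div (k1 * k2 * k))"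
      using le P_nonneg by (simp add: norm_tensor[OF P_bdd])
    show "(\<lambda>n. c1 * c2 * c * a (n div (k1 * k2 * k))) \<longlonglongrightarrow> 0"
      using tendsto_mult_right_zero[OF dilation_null[OF a_null k]] .
  qed
  then have "tensor \<beta> \<gamma> \<in> c0" unfolding c0_iff_norm .
  moreover have "\<forall>n. dstar (tensor \<beta> \<gamma>) n \<le> c1 * c2 * c * a (n div (k1 * k2 * k))"
    unfolding dstar_tensor[OF P_bdd] using le by blast
  ultimately show ?thesis unfolding principal_def using c k by blast
qed

lemma of_real_in_calkin_of_tensor:
  assumes I: "calkin I"
    and "tensor (\<lambda>n. complex_of_real (a n)) (\<lambda>n. complex_of_real (a n)) \<in> I"
  shows "(\<lambda>n. complex_of_real (a n)) \<in> I"
proof -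
  let ?\<alpha> = "\<lambda>n. complex_of_real (a n)"
  let ?Q = "\<lambda>p. a (fst p) * a (snd p)"
  \<comment> \<open>If \<open>a 0 = 0\<close> then \<open>1 / a 0 = 0\<close>, but then \<open>a = 0\<close> as well.\<close>
  let ?x = "\<lambda>n. complex_of_real (1 / a 0) * tensor ?\<alpha> ?\<alpha> n"
  have P: "(\<lambda>p. norm (?\<alpha> (fst p)) * norm (?\<alpha> (snd p))) = ?Q" by (simp add: a_nonneg)
  have "a m \<le> a 0" for m using decseqD[OF a_dec] by simp
  then have Q_bdd: "bdd_above (range ?Q)"
    using a_nonneg by (intro bdd_aboveI[of _ "a 0 * a 0"]) (auto intro: mult_mono)
  have norm_x: "norm (?x n) = rearr ?Q n / a 0" for n
    using norm_tensor[of ?\<alpha> ?\<alpha>] Q_bdd a_nonneg[of 0] unfolding P by (simp add: norm_mult norm_divide)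
  have "decseq (\<lambda>n. rearr ?Q n / a 0)"
    using decseq_rearr[OF infinite_prod_nat _ Q_bdd] a_nonneg a_nonneg[of 0]
    by (simp add: decseq_def divide_right_mono)
  then have dstar_x: "dstar ?x = (\<lambda>n. rearr ?Q n / a 0)"
    unfolding dstar_def norm_x
    using rearr_decseq rearr_nonneg[OF infinite_prod_nat _ Q_bdd] a_nonneg a_nonneg[of 0] by simp
  have "a n \<le> rearr ?Q n / a 0" for n
  proof (cases "a 0 = 0")
    case True
    then have "a n = 0" using decseqD[OF a_dec, of 0 n] a_nonneg[of n] by linarith
    then show ?thesis using True by simp
  next
    case False
    then have "0 < a 0" using a_nonneg[of 0] by linarith
    with le_rearr_product[OF a_nonneg a_dec, of n] show ?thesis by (simp add: le_divide_eq mult.commute)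
  qed
  moreover have "?x \<in> I" using calkin_scale[OF I assms(2)] .
  ultimately show ?thesis
    using calkin_dstar_le[OF I _ of_real_in_principal[THEN principal_c0]]
    unfolding dstar_of_real by (metis dstar_x)
qed

lemma stable_principal:
  assumes "dominated (\<lambda>p. a (fst p) * a (snd p)) a c k \<theta>"
  shows "stable (calkin_hull {\<lambda>n. complex_of_real (a n)})"
proof -
  let ?T = "{tensor \<beta> \<gamma> | \<beta> \<gamma>. \<beta> \<in> principal a \<and> \<gamma> \<in> principal a}"
  have "?T \<subseteq> principal a" using tensor_in_principal[OF assms] by blast
  then have "calkin_hull ?T \<subseteq> principal a"
    unfolding calkin_hull_def using calkin_principal by blast
  moreover have "principal a \<subseteq> I" if "calkin I" "?T \<subseteq> I" for I
    using that of_real_in_calkin_of_tensor of_real_in_principal principal_subset by blast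
  then have "principal a \<subseteq> calkin_hull ?T" unfolding calkin_hull_def by blast
  ultimately show ?thesis
    unfolding stable_def calkin_hull_principal using calkin_principal by blast
qed

end

section \<open>Domination of the products under the growth condition\<close>

lemma mono_block_unique:
  fixes L :: "nat \<Rightarrow> nat"
  assumes "mono L" "L s \<le> t" "t < L (Suc s)" "L s' \<le> t" "t < L (Suc s')"
  shows "s = s'"
proof (rule ccontr)
  assume "s \<noteq> s'"
  then consider "Suc s \<le> s'" | "Suc s' \<le> s" by linarith
  then show False
    using monoD[OF assms(1), of "Suc s" s'] monoD[OF assms(1), of "Suc s'" s] assms(2-5)
    by cases linarith+
qed

lemma card_div_fibre_le:
  assumes "inj_on f A" "\<And>x. x \<in> A \<Longrightarrow> f x div k = d" "0 < (k::nat)"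
  shows "finite A \<and> card A \<le> k"
proof
  have sub: "f ` A \<subseteq> {d * k..<d * k + k}" using assms(2) div_fibre_subset[OF assms(3)] by blast
  then have "finite (f ` A)" by (rule finite_subset) simp
  then show "finite A" using finite_imageD[OF _ assms(1)] by blast
  have "card A = card (f ` A)" using card_image[OF assms(1)] by simp
  also have "\<dots> \<le> k" using card_mono[OF finite_atLeastLessThan sub] by simp
  finally show "card A \<le> k" .
qed

lemma packing_into_blocks:
  fixes lvl :: "'a \<Rightarrow> nat" and L :: "nat \<Rightarrow> nat"
  assumes L: "mono L" and K: "K > 0"
    and fin: "\<And>s. finite {p \<in> S. lvl p = s}"
    and card: "\<And>s. card {p \<in> S. lvl p = s} \<le> K * (L (Suc s) - L s)"
  obtains \<theta> where "\<And>p. p \<in> S \<Longrightarrow> L (lvl p) \<le> \<theta> p \<and> \<theta> p < L (Suc (lvl p))"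
    and "\<And>t. finite {p \<in> S. \<theta> p = t} \<and> card {p \<in> S. \<theta> p = t} \<le> K"
proof -
  have "\<forall>s. \<exists>h. bij_betw h {p \<in> S. lvl p = s} {0..<card {p \<in> S. lvl p = s}}"
    using ex_bij_betw_finite_nat[OF fin] by blast
  then obtain enum
    where enum: "\<forall>s. bij_betw (enum s) {p \<in> S. lvl p = s} {0..<card {p \<in> S. lvl p = s}}"
    by (rule choice[THEN exE])
  \<comment> \<open>The elements of level \<open>s\<close> are sent, \<open>K\<close> consecutive ones at a time, to the
    indices of the block \<open>[L s, L (Suc s))\<close>.\<close>
  define \<theta> where "\<theta> p = L (lvl p) + enum (lvl p) p div K" for p
  have block: "L (lvl p) \<le> \<theta> p \<and> \<theta> p < L (Suc (lvl p))" if "p \<in> S" for p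
  proof -
    have "enum (lvl p) p < card {q \<in> S. lvl q = lvl p}"
      using bij_betwE[OF spec[OF enum, of "lvl p"]] that by simp
    then have "enum (lvl p) p < K * (L (Suc (lvl p)) - L (lvl p))"
      using card[of "lvl p"] by linarith
    then have "enum (lvl p) p div K < L (Suc (lvl p)) - L (lvl p)"
      using K by (simp add: div_less_iff_less_mult mult.commute)
    then show ?thesis unfolding \<theta>_def by simp
  qed
  have "finite {p \<in> S. \<theta> p = t} \<and> card {p \<in> S. \<theta> p = t} \<le> K" for t
  proof (cases "{p \<in> S. \<theta> p = t} = {}")
    case True
    then show ?thesis by (simp only: finite.emptyI card.empty) simp
  next
    case False
    then obtain p0 where "p0 \<in> S" "\<theta> p0 = t" by blast
    have same_level: "lvl p = lvl p0" if "p \<in> {p \<in> S. \<theta> p = t}" for p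
      using that block[of p] block[OF \<open>p0 \<in> S\<close>] \<open>\<theta> p0 = t\<close>
        mono_block_unique[OF L, of "lvl p" t "lvl p0"] by simp
    have "inj_on (enum (lvl p0)) {p \<in> S. \<theta> p = t}"
      by (rule inj_on_subset[OF bij_betw_imp_inj_on[OF spec[OF enum, of "lvl p0"]]])
        (use same_level in blast)
    moreover have "enum (lvl p0) p div K = t - L (lvl p0)" if "p \<in> {p \<in> S. \<theta> p = t}" for p
      using that same_level[OF that] unfolding \<theta>_def by auto
    ultimately show ?thesis using card_div_fibre_le K by blast
  qed
  then show ?thesis using that block by blast
qed

definition count_above :: "(nat \<Rightarrow> real) \<Rightarrow> real \<Rightarrow> nat" where
  "count_above a x = card {m. x < a m}"

lemma down_closed_eq_lessThan:
  fixes S :: "nat set"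
  assumes "finite S" "\<And>m n. n \<in> S \<Longrightarrow> m \<le> n \<Longrightarrow> m \<in> S"
  shows "S = {..<card S}"
proof (cases "S = {}")
  case False
  have "S = {..Max S}"
    using Max_ge[OF assms(1)] assms(2)[OF Max_in[OF assms(1) False]] by auto
  then show ?thesis by (metis card_atMost lessThan_Suc_atMost)
qed simp

context
  fixes a :: "nat \<Rightarrow> real"
  assumes a_dec: "decseq a" and a_null: "a \<longlonglongrightarrow> 0"
begin

lemma finite_superlevel: "0 < x \<Longrightarrow> finite {m. x < a m}"
  using finite_superlevel_null[OF a_null] by (rule finite_subset[rotated]) auto

lemma superlevel_eq_lessThan: "0 < x \<Longrightarrow> {m. x < a m} = {..<count_above a x}"
  unfolding count_above_def
  using decseqD[OF a_dec] by (intro down_closed_eq_lessThan finite_superlevel) (auto intro: less_le_trans)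

lemma count_above_antimono: "0 < x \<Longrightarrow> x \<le> y \<Longrightarrow> count_above a y \<le> count_above a x"
  unfolding count_above_def by (intro card_mono finite_superlevel) auto

lemma Kw_eq_count_above_diff:
  assumes "0 < \<omega>" "\<omega> \<le> 1"
  shows "Kw \<omega> a n = count_above a (\<omega> ^ Suc n) - count_above a (\<omega> ^ n)"
proof -
  have "\<omega> ^ Suc n \<le> \<omega> ^ n" using assms by (simp add: mult_left_le_one_le)
  then have "{m. \<omega> ^ (n + 1) < a m \<and> a m \<le> \<omega> ^ n} = {m. \<omega> ^ Suc n < a m} - {m. \<omega> ^ n < a m}"
    "{m. \<omega> ^ n < a m} \<subseteq> {m. \<omega> ^ Suc n < a m}"
    by auto
  then show ?thesis
    unfolding Kw_def count_above_def using assms(1)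
    by (simp add: card_Diff_subset finite_subset[OF _ finite_superlevel])
qed

lemma sum_Kw_eq_count_above:
  assumes "0 < \<omega>" "\<omega> \<le> 1" "a 0 \<le> 1"
  shows "(\<Sum>i\<le>n. Kw \<omega> a i) = count_above a (\<omega> ^ Suc n)"
proof (induction n)
  case 0
  have "a m \<le> 1" for m using decseqD[OF a_dec, of 0 m] assms(3) by simp
  then have "{m. 1 < a m} = {}" by (auto simp: not_less)
  then show ?case using Kw_eq_count_above_diff[OF assms(1,2), of 0] by (simp add: count_above_def)
next
  case (Suc n)
  have "\<omega> ^ Suc (Suc n) \<le> \<omega> ^ Suc n" using assms(1,2) by (simp add: mult_left_le_one_le)
  then show ?case
    using Suc Kw_eq_count_above_diff[OF assms(1,2), of "Suc n"]
      count_above_antimono[of "\<omega> ^ Suc (Suc n)"] assms(1) by simp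
qed

end

lemma exists_power_bracket:
  fixes \<omega> y :: real
  assumes "0 < \<omega>" "\<omega> < 1" "0 < y" "y \<le> 1"
  shows "\<exists>i. \<omega> ^ Suc i < y \<and> y \<le> \<omega> ^ i"
proof -
  obtain n where "\<omega> ^ n < y" "\<forall>m < n. \<not> \<omega> ^ m < y"
    using real_arch_pow_inv[OF assms(3,2)] exists_least_iff[of "\<lambda>n. \<omega> ^ n < y"] by blast
  moreover have "n \<noteq> 0"
  proof
    assume "n = 0"
    then show False using \<open>\<omega> ^ n < y\<close> assms(4) by simp
  qed
  ultimately show ?thesis by (metis lessI not0_implies_Suc not_less)
qed

lemma exponent_map:
  fixes a :: "'a \<Rightarrow> real" and \<omega> :: real
  assumes "0 < \<omega>" "\<omega> < 1" "\<And>u. a u \<le> 1"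
  obtains e where "\<And>u. 0 < a u \<Longrightarrow> \<omega> ^ Suc (e u) < a u \<and> a u \<le> \<omega> ^ e u"
proof -
  have "\<exists>i. 0 < a u \<longrightarrow> \<omega> ^ Suc i < a u \<and> a u \<le> \<omega> ^ i" for u
    using exists_power_bracket[OF assms(1,2) _ assms(3)] by blast
  then have "\<forall>u. \<exists>i. 0 < a u \<longrightarrow> \<omega> ^ Suc i < a u \<and> a u \<le> \<omega> ^ i" by blast
  then obtain e where "\<forall>u. 0 < a u \<longrightarrow> \<omega> ^ Suc (e u) < a u \<and> a u \<le> \<omega> ^ e u"
    by (rule choice[THEN exE])
  then show ?thesis using that by blast
qed

lemma level_pairs_subset:
  fixes a :: "nat \<Rightarrow> real" and \<omega> :: real
  assumes a_dec: "decseq a" and a_null: "a \<longlonglongrightarrow> 0" and \<omega>: "0 < \<omega>" "\<omega> < 1"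
    and e: "\<And>u. 0 < a u \<Longrightarrow> \<omega> ^ Suc (e u) < a u"
  shows "{p. 0 < a (fst p) \<and> 0 < a (snd p) \<and> e (fst p) + e (snd p) = s}
    \<subseteq> {..<count_above a (\<omega> ^ Suc s)} \<times> {..<count_above a (\<omega> ^ Suc s)}"
proof -
  have "u < count_above a (\<omega> ^ Suc s)" if "0 < a u" "e u \<le> s" for u
  proof -
    have "\<omega> ^ Suc s \<le> \<omega> ^ Suc (e u)" using \<omega> that(2) by (simp add: power_decreasing)
    then have "u \<in> {m. \<omega> ^ Suc s < a m}" using e[OF that(1)] by simp
    then show ?thesis
      unfolding superlevel_eq_lessThan[OF a_dec a_null zero_less_power[OF \<omega>(1)]] by simp
  qed
  then show ?thesis by (auto simp: mem_Times_iff)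
qed

lemma product_le_block_term:
  fixes a :: "nat \<Rightarrow> real" and \<omega> :: real
  assumes a_dec: "decseq a" and a_null: "a \<longlonglongrightarrow> 0" and "0 < \<omega>"
    and "\<And>u. 0 \<le> a u" "a i \<le> \<omega> ^ e" "a j \<le> \<omega> ^ e'"
    and "m < count_above a (\<omega> ^ Suc (Suc (e + e')))"
  shows "a i * a j \<le> 1 / \<omega>^2 * a m"
proof -
  have "m \<in> {m. \<omega> ^ Suc (Suc (e + e')) < a m}"
    unfolding superlevel_eq_lessThan[OF a_dec a_null zero_less_power[OF \<open>0 < \<omega>\<close>]]
    using assms(7) by simp
  then have "\<omega>^2 * \<omega> ^ (e + e') \<le> a m" by (simp add: power2_eq_square)
  moreover have "a i * a j \<le> \<omega> ^ (e + e')"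
    unfolding power_add using assms(2-6) by (intro mult_mono) auto
  ultimately have "\<omega>^2 * (a i * a j) \<le> a m"
    by (meson mult_left_mono order_trans zero_le_power2)
  then show ?thesis using \<open>0 < \<omega>\<close> by (simp add: field_simps)
qed

lemma product_dominated_if_count_above_growth:
  fixes a :: "nat \<Rightarrow> real" and \<omega> :: real
  assumes a_nonneg: "\<And>m. a m \<ge> 0" and a_dec: "decseq a" and a_null: "a \<longlonglongrightarrow> 0"
    and "a 0 \<le> 1" and \<omega>: "0 < \<omega>" "\<omega> < 1" and "K > 0"
    and growth: "\<And>s. count_above a (\<omega> ^ Suc s) ^ 2
      \<le> K * (count_above a (\<omega> ^ Suc (Suc s)) - count_above a (\<omega> ^ Suc s))"
  shows "\<exists>\<theta>. dominated (\<lambda>p. a (fst p) * a (snd p)) a (1 / \<omega>^2) K \<theta>"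
proof -
  define L where "L s = count_above a (\<omega> ^ Suc s)" for s
  have "mono L"
    unfolding L_def using \<omega>
    by (intro monoI count_above_antimono[OF a_dec a_null]) (simp_all add: power_decreasing)
  have a_le_1: "a u \<le> 1" for u using decseqD[OF a_dec, of 0 u] \<open>a 0 \<le> 1\<close> by simp
  obtain e where e: "\<And>u. 0 < a u \<Longrightarrow> \<omega> ^ Suc (e u) < a u \<and> a u \<le> \<omega> ^ e u"
    by (rule exponent_map[OF \<omega>, of a]) (use a_le_1 in blast)+
  define S where "S = {p. 0 < a (fst p) \<and> 0 < a (snd p)}"
  define lvl where "lvl p = e (fst p) + e (snd p)" for p
  have "{p \<in> S. lvl p = s} = {p. 0 < a (fst p) \<and> 0 < a (snd p) \<and> e (fst p) + e (snd p) = s}"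
    for s unfolding S_def lvl_def by blast
  then have level_sub: "{p \<in> S. lvl p = s} \<subseteq> {..<L s} \<times> {..<L s}" for s
    unfolding L_def using level_pairs_subset[OF a_dec a_null \<omega>, of e s] e by simp
  then have fin: "finite {p \<in> S. lvl p = s}" for s by (rule finite_subset) simp
  have "card {p \<in> S. lvl p = s} \<le> K * (L (Suc s) - L s)" for s
  proof -
    have "card {p \<in> S. lvl p = s} \<le> L s ^ 2"
      using card_mono[OF _ level_sub[of s]] by (simp add: card_cartesian_product power2_eq_square)
    then show ?thesis using growth[of s] unfolding L_def by linarith
  qed
  then obtain \<theta> where \<theta>: "\<And>p. p \<in> S \<Longrightarrow> L (lvl p) \<le> \<theta> p \<and> \<theta> p < L (Suc (lvl p))"
    and fibre: "\<And>t. finite {p \<in> S. \<theta> p = t} \<and> card {p \<in> S. \<theta> p = t} \<le> K"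
    by (rule packing_into_blocks[OF \<open>mono L\<close> \<open>K > 0\<close> fin]) blast
  have le: "a (fst p) * a (snd p) \<le> 1 / \<omega>^2 * a (\<theta> p)" for p
  proof (cases "p \<in> S")
    case True
    then have "a (fst p) \<le> \<omega> ^ e (fst p)" "a (snd p) \<le> \<omega> ^ e (snd p)"
      using e unfolding S_def by auto
    moreover have "\<theta> p < count_above a (\<omega> ^ Suc (Suc (e (fst p) + e (snd p))))"
      using \<theta>[OF True] unfolding L_def lvl_def by simp
    ultimately show ?thesis by (rule product_le_block_term[OF a_dec a_null \<omega>(1) a_nonneg])
  next
    case False
    then have "a (fst p) * a (snd p) = 0" using a_nonneg unfolding S_def by (auto simp: less_le)
    moreover have "0 \<le> 1 / \<omega>^2 * a (\<theta> p)" using a_nonneg by simp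
    ultimately show ?thesis by linarith
  qed
  have "{p. \<theta> p = t \<and> a (fst p) * a (snd p) \<noteq> 0} = {p \<in> S. \<theta> p = t}" for t
    using a_nonneg unfolding S_def by (auto simp: less_le)
  then have "dominated (\<lambda>p. a (fst p) * a (snd p)) a (1 / \<omega>^2) K \<theta>"
    unfolding dominated_def using \<omega> \<open>K > 0\<close> le fibre by simp
  then show ?thesis by blast
qed

lemma count_above_growth_if_Kw_growth:
  fixes a :: "nat \<Rightarrow> real" and \<omega> C :: real
  assumes a_dec: "decseq a" and a_null: "a \<longlonglongrightarrow> 0" and "a 0 \<le> 1"
    and \<omega>: "0 < \<omega>" "\<omega> < 1" and "C > 0"
    and growth: "\<And>n. C * (\<Sum>i\<le>n. real (Kw \<omega> a i)) ^ 2 \<le> real (Kw \<omega> a (Suc n))"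
  shows "count_above a (\<omega> ^ Suc s) ^ 2
    \<le> nat \<lceil>1 / C\<rceil> * (count_above a (\<omega> ^ Suc (Suc s)) - count_above a (\<omega> ^ Suc s))"
proof -
  let ?K = "nat \<lceil>1 / C\<rceil>"
  let ?L = "count_above a (\<omega> ^ Suc s)"
  let ?D = "count_above a (\<omega> ^ Suc (Suc s)) - count_above a (\<omega> ^ Suc s)"
  have "(\<Sum>i\<le>s. Kw \<omega> a i) = ?L"
    using sum_Kw_eq_count_above[OF a_dec a_null \<omega>(1) less_imp_le[OF \<omega>(2)] \<open>a 0 \<le> 1\<close>] .
  then have "(\<Sum>i\<le>s. real (Kw \<omega> a i)) = real ?L"
    unfolding of_nat_sum[symmetric] by (rule arg_cong)
  then have CL: "C * real ?L ^ 2 \<le> real ?D"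
    using growth[of s] Kw_eq_count_above_diff[OF a_dec a_null \<omega>(1) less_imp_le[OF \<omega>(2)], of "Suc s"]
    by simp
  have "1 \<le> real ?K * C"
  proof -
    have "1 \<le> real_of_int \<lceil>1 / C\<rceil> * C"
      using le_of_int_ceiling[of "1 / C"] by (simp only: pos_divide_le_eq[OF \<open>C > 0\<close>])
    moreover have "real ?K = real_of_int \<lceil>1 / C\<rceil>"
      using \<open>C > 0\<close> by simp
    ultimately show ?thesis by simp
  qed
  then have "real ?L ^ 2 \<le> (real ?K * C) * real ?L ^ 2"
    using mult_right_mono[of 1 "real ?K * C" "real ?L ^ 2"] by simp
  also have "\<dots> = real ?K * (C * real ?L ^ 2)" by (simp only: mult.assoc)
  also have "\<dots> \<le> real ?K * real ?D" using CL by (rule mult_left_mono) simp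
  finally have "real (?L ^ 2) \<le> real (?K * ?D)" by simp
  then show ?thesis by (simp only: of_nat_le_iff)
qed

theorem corollary2p9:
  fixes \<alpha> :: "nat \<Rightarrow> real" and \<omega> C :: real
  assumes "\<And>n. \<alpha> n \<ge> 0"
    and "decseq \<alpha>"
    and "\<alpha> \<longlonglongrightarrow> 0"
    and "\<alpha> 0 \<le> 1"
    and "0 < \<omega>" and "\<omega> < 1"
    and "C > 0"
    and "\<And>n j. j \<ge> 1 \<Longrightarrow>
           real (Kw \<omega> \<alpha> (n + j)) \<ge> C * (\<Sum>i\<le>n. real (Kw \<omega> \<alpha> i)) ^ 2"
  shows "stable (calkin_hull {(\<lambda>n. complex_of_real (\<alpha> n))})"
proof -
  have growth: "C * (\<Sum>i\<le>n. real (Kw \<omega> \<alpha> i)) ^ 2 \<le> real (Kw \<omega> \<alpha> (Suc n))" for n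
    using assms(8)[of 1 n] by simp
  have "nat \<lceil>1 / C\<rceil> > 0" using \<open>C > 0\<close> by simp
  from product_dominated_if_count_above_growth[OF assms(1-6) this
      count_above_growth_if_Kw_growth[OF assms(2-7) growth]]
  obtain \<theta> where "dominated (\<lambda>p. \<alpha> (fst p) * \<alpha> (snd p)) \<alpha> (1 / \<omega>^2) (nat \<lceil>1 / C\<rceil>) \<theta>"
    by blast
  then show ?thesis by (rule stable_principal[OF assms(1-3)])
qed

end
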